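(* Let $\varphi:\Lambda\to\Gamma$ be a regular covering map of finite simplicial graphs. If $u_1,u_2$ are vertices of $\Lambda$ with $u_1\lesssim u_2$, then $\varphi(u_1)\lesssim\varphi(u_2)$. Moreover, for every vertex $u$ of $\Lambda$, $\varphi(V\Lambda_{\gtrsim u})=V\Gamma_{\gtrsim_\varphi\varphi(u)}$.
   Context: Graphs are finite simplicial graphs; subgraphs are induced. $\mathrm{lk}(v)$ is the subgraph induced by the neighbours of $v$ and $\mathrm{st}(v)$ the subgraph induced by $\mathrm{lk}(v)\cup\{v\}$. The link-star order on vertices: $x\lesssim y$ iff $\mathrm{lk}(x)\subseteq\mathrm{st}(y)$; $V\Lambda_{\gtrsim u}=\{u'\in V\Lambda: u\lesssim u'\}$. A covering map $\varphi:\Lambda\to\Gamma$ is a surjective simplicial map mapping the neighbours of each vertex $u$ bijectively onto the neighbours of $\varphi(u)$; regular means the group of graph automorphisms $\mu$ of $\Lambda$ with $\varphi\mu=\varphi$ acts transitively on each fiber. For vertices $x,y$ of $\Gamma$, $x\lesssim_\varphi y$ means: for every $w\in\varphi^{-1}(x)$ there is $w'\in\varphi^{-1}(y)$ with $\mathrm{lk}(w)\subseteq\mathrm{st}(w')$; $V\Gamma_{\gtrsim_\varphi x}=\{y\in V\Gamma: x\lesssim_\varphi y\}$. *)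

theory Defs
  imports Main
begin

type_synonym 'a graph = "'a set \<times> ('a \<Rightarrow> 'a \<Rightarrow> bool)"

definition verts :: "'a graph \<Rightarrow> 'a set" where "verts G = fst G"
definition adj :: "'a graph \<Rightarrow> 'a \<Rightarrow> 'a \<Rightarrow> bool" where "adj G = snd G"

definition simple_graph :: "'a graph \<Rightarrow> bool" where
  "simple_graph G \<longleftrightarrow> finite (verts G)
     \<and> (\<forall>u v. adj G u v \<longrightarrow> u \<in> verts G \<and> v \<in> verts G)
     \<and> (\<forall>u v. adj G u v \<longrightarrow> adj G v u)
     \<and> (\<forall>u. \<not> adj G u u)"

text \<open>Vertex sets of link and star (these are induced subgraphs, so containment
  of the induced subgraphs is containment of vertex sets).\<close>
definition lk :: "'a graph \<Rightarrow> 'a \<Rightarrow> 'a set" where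
  "lk G v = {w \<in> verts G. adj G v w}"

definition st :: "'a graph \<Rightarrow> 'a \<Rightarrow> 'a set" where
  "st G v = insert v (lk G v)"

definition lso :: "'a graph \<Rightarrow> 'a \<Rightarrow> 'a \<Rightarrow> bool" where
  "lso G x y \<longleftrightarrow> lk G x \<subseteq> st G y"

definition up_set :: "'a graph \<Rightarrow> 'a \<Rightarrow> 'a set" where
  "up_set G u = {u' \<in> verts G. lso G u u'}"

definition covering_map :: "'a graph \<Rightarrow> 'b graph \<Rightarrow> ('a \<Rightarrow> 'b) \<Rightarrow> bool" where
  "covering_map L G \<phi> \<longleftrightarrow>
     \<phi> ` verts L = verts G
     \<and> (\<forall>u v. adj L u v \<longrightarrow> adj G (\<phi> u) (\<phi> v))
     \<and> (\<forall>u \<in> verts L. bij_betw \<phi> (lk L u) (lk G (\<phi> u)))"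

definition graph_aut :: "'a graph \<Rightarrow> ('a \<Rightarrow> 'a) \<Rightarrow> bool" where
  "graph_aut L \<mu> \<longleftrightarrow> bij_betw \<mu> (verts L) (verts L)
     \<and> (\<forall>u \<in> verts L. \<forall>v \<in> verts L. adj L (\<mu> u) (\<mu> v) \<longleftrightarrow> adj L u v)"

definition deck :: "'a graph \<Rightarrow> ('a \<Rightarrow> 'b) \<Rightarrow> ('a \<Rightarrow> 'a) set" where
  "deck L \<phi> = {\<mu>. graph_aut L \<mu> \<and> (\<forall>u \<in> verts L. \<phi> (\<mu> u) = \<phi> u)}"

definition regular_covering :: "'a graph \<Rightarrow> 'b graph \<Rightarrow> ('a \<Rightarrow> 'b) \<Rightarrow> bool" where
  "regular_covering L G \<phi> \<longleftrightarrow> covering_map L G \<phi>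
     \<and> (\<forall>u \<in> verts L. \<forall>u' \<in> verts L. \<phi> u = \<phi> u' \<longrightarrow> (\<exists>\<mu> \<in> deck L \<phi>. \<mu> u = u'))"

definition lso_rel :: "'a graph \<Rightarrow> 'b graph \<Rightarrow> ('a \<Rightarrow> 'b) \<Rightarrow> 'b \<Rightarrow> 'b \<Rightarrow> bool" where
  "lso_rel L G \<phi> x y \<longleftrightarrow>
     (\<forall>w \<in> verts L. \<phi> w = x \<longrightarrow> (\<exists>w' \<in> verts L. \<phi> w' = y \<and> lk L w \<subseteq> st L w'))"

definition up_set_rel :: "'a graph \<Rightarrow> 'b graph \<Rightarrow> ('a \<Rightarrow> 'b) \<Rightarrow> 'b \<Rightarrow> 'b set" where
  "up_set_rel L G \<phi> x = {y \<in> verts G. lso_rel L G \<phi> x y}"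

end

theory Submission
  imports Defs
begin

lemma graph_aut_verts:
  assumes "graph_aut L \<mu>" "v \<in> verts L"
  shows "\<mu> v \<in> verts L"
  using assms unfolding graph_aut_def bij_betw_def by auto

lemma graph_aut_lk:
  assumes "graph_aut L \<mu>" "v \<in> verts L"
  shows "lk L (\<mu> v) = \<mu> ` lk L v"
proof
  have bij: "bij_betw \<mu> (verts L) (verts L)"
    and adj: "\<forall>u \<in> verts L. \<forall>w \<in> verts L. adj L (\<mu> u) (\<mu> w) \<longleftrightarrow> adj L u w"
    using assms(1) unfolding graph_aut_def by auto
  show "lk L (\<mu> v) \<subseteq> \<mu> ` lk L v"
  proof
    fix w assume w: "w \<in> lk L (\<mu> v)"
    then obtain w0 where "w0 \<in> verts L" "w = \<mu> w0"
      using bij unfolding lk_def bij_betw_def by auto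
    then show "w \<in> \<mu> ` lk L v" using w adj assms(2) unfolding lk_def by auto
  qed
  show "\<mu> ` lk L v \<subseteq> lk L (\<mu> v)"
    using adj bij assms(2) unfolding lk_def bij_betw_def by auto
qed

lemma graph_aut_st:
  assumes "graph_aut L \<mu>" "v \<in> verts L"
  shows "st L (\<mu> v) = \<mu> ` st L v"
  using graph_aut_lk[OF assms] unfolding st_def by auto

lemma graph_aut_lso:
  assumes "graph_aut L \<mu>" "u \<in> verts L" "v \<in> verts L" "lso L u v"
  shows "lso L (\<mu> u) (\<mu> v)"
  using assms(4) graph_aut_lk[OF assms(1,2)] graph_aut_st[OF assms(1,3)]
  unfolding lso_def by auto

lemma covering_map_lk:
  assumes "covering_map L G \<phi>" "v \<in> verts L"
  shows "lk G (\<phi> v) = \<phi> ` lk L v"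
  using assms unfolding covering_map_def bij_betw_def by auto

lemma covering_map_lso:
  assumes "covering_map L G \<phi>" "u \<in> verts L" "v \<in> verts L" "lso L u v"
  shows "lso G (\<phi> u) (\<phi> v)"
  using assms(4) covering_map_lk[OF assms(1,2)] covering_map_lk[OF assms(1,3)]
  unfolding lso_def st_def by auto

text \<open>For a regular covering, the relative order needs to be checked at a single point of the
  fibre: a deck transformation moves that point to any other one and preserves the order.\<close>
lemma regular_covering_lso_rel_iff:
  assumes "regular_covering L G \<phi>" "u \<in> verts L"
  shows "lso_rel L G \<phi> (\<phi> u) y \<longleftrightarrow> (\<exists>u' \<in> verts L. \<phi> u' = y \<and> lso L u u')"
proof
  assume "lso_rel L G \<phi> (\<phi> u) y"
  then show "\<exists>u' \<in> verts L. \<phi> u' = y \<and> lso L u u'"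
    using assms(2) unfolding lso_rel_def lso_def by auto
next
  assume "\<exists>u' \<in> verts L. \<phi> u' = y \<and> lso L u u'"
  then obtain u' where u': "u' \<in> verts L" "\<phi> u' = y" "lso L u u'" by blast
  show "lso_rel L G \<phi> (\<phi> u) y"
    unfolding lso_rel_def
  proof (intro ballI impI)
    fix w assume w: "w \<in> verts L" "\<phi> w = \<phi> u"
    then obtain \<mu> where "\<mu> \<in> deck L \<phi>" "\<mu> u = w"
      using assms unfolding regular_covering_def by metis
    then have aut: "graph_aut L \<mu>" and "\<phi> (\<mu> u') = y" and "\<mu> u = w"
      using u' unfolding deck_def by auto
    moreover have "lso L (\<mu> u) (\<mu> u')"
      using graph_aut_lso[OF aut assms(2) u'(1,3)] .
    ultimately show "\<exists>w' \<in> verts L. \<phi> w' = y \<and> lk L w \<subseteq> st L w'"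
      using graph_aut_verts[OF aut u'(1)] unfolding lso_def by blast
  qed
qed

lemma regular_covering_image_up_set:
  assumes "regular_covering L G \<phi>" "u \<in> verts L"
  shows "\<phi> ` up_set L u = up_set_rel L G \<phi> (\<phi> u)"
proof -
  have "\<phi> ` verts L = verts G"
    using assms(1) unfolding regular_covering_def covering_map_def by auto
  then show ?thesis
    using regular_covering_lso_rel_iff[OF assms]
    unfolding up_set_def up_set_rel_def by auto
qed

theorem lemma3p1:
  fixes L :: "'a graph" and G :: "'b graph" and \<phi> :: "'a \<Rightarrow> 'b"
  assumes "simple_graph L" and "simple_graph G"
    and "regular_covering L G \<phi>"
  shows "(\<forall>u1 \<in> verts L. \<forall>u2 \<in> verts L. lso L u1 u2 \<longrightarrow> lso G (\<phi> u1) (\<phi> u2))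
     \<and> (\<forall>u \<in> verts L. \<phi> ` up_set L u = up_set_rel L G \<phi> (\<phi> u))"
proof -
  have "covering_map L G \<phi>"
    using assms(3) unfolding regular_covering_def by simp
  then show ?thesis
    by (simp add: covering_map_lso regular_covering_image_up_set[OF assms(3)])
qed

end
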